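(* Let $m\ge 3$, $H=B(l_1,\ldots,l_m)$ with $l_1\le l_2\le 2$, and $G=H^2$. Then $G$ is equitably $(m+1)$-choosable.
   Context: All graphs are finite and simple. For $m,l_1,\ldots,l_m\in\mathbb{N}$ with $l_1\le\cdots\le l_m$, $B(l_1,\ldots,l_m)$ is the graph with vertex set $\{u\}\cup\{v_{i,j}: i\in[m], j\in[l_i]\}$ in which, for each $i\in[m]$, consecutive vertices in the sequence $u, v_{i,1},\ldots,v_{i,l_i}$ are adjacent (and there are no other edges). For a graph $H$, $H^2$ has vertex set $V(H)$ with two vertices adjacent iff their distance in $H$ is 1 or 2. A $k$-assignment $L$ assigns to each vertex a set of exactly $k$ colors; an equitable $L$-coloring of $G$ is a proper coloring $f$ with $f(v)\in L(v)$ such that no color is used more than $\lceil |V(G)|/k\rceil$ times; $G$ is equitably $k$-choosable if it has an equitable $L$-coloring for every $k$-assignment $L$. *)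

theory Defs
  imports Complex_Main
begin

text \<open>Graphs are given by a finite vertex set V and a symmetric irreflexive
adjacency relation E (only meaningful on V).\<close>

definition graph_square :: "'a set \<Rightarrow> ('a \<Rightarrow> 'a \<Rightarrow> bool) \<Rightarrow> 'a \<Rightarrow> 'a \<Rightarrow> bool" where
  "graph_square V E x y \<longleftrightarrow> x \<in> V \<and> y \<in> V \<and> x \<noteq> y \<and>
     (E x y \<or> (\<exists>z\<in>V. E x z \<and> E z y))"

definition k_assignment :: "'a set \<Rightarrow> ('a \<Rightarrow> nat set) \<Rightarrow> nat \<Rightarrow> bool" where
  "k_assignment V L k \<longleftrightarrow> (\<forall>v\<in>V. finite (L v) \<and> card (L v) = k)"

definition equitable_L_coloring ::
    "'a set \<Rightarrow> ('a \<Rightarrow> 'a \<Rightarrow> bool) \<Rightarrow> ('a \<Rightarrow> nat set) \<Rightarrow> nat \<Rightarrow> ('a \<Rightarrow> nat) \<Rightarrow> bool" where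
  "equitable_L_coloring V E L k f \<longleftrightarrow>
     (\<forall>v\<in>V. f v \<in> L v) \<and>
     (\<forall>u\<in>V. \<forall>v\<in>V. E u v \<longrightarrow> f u \<noteq> f v) \<and>
     (\<forall>c. card {v\<in>V. f v = c} \<le> nat \<lceil>real (card V) / real k\<rceil>)"

definition equitably_choosable :: "'a set \<Rightarrow> ('a \<Rightarrow> 'a \<Rightarrow> bool) \<Rightarrow> nat \<Rightarrow> bool" where
  "equitably_choosable V E k \<longleftrightarrow>
     (\<forall>L. k_assignment V L k \<longrightarrow> (\<exists>f. equitable_L_coloring V E L k f))"

text \<open>The spider graph B(l_1,...,l_m): centre u = (0,0), v_{i,j} = (i,j)
for 1 \<le> i \<le> m, 1 \<le> j \<le> l i.\<close>

definition spider_V :: "nat \<Rightarrow> (nat \<Rightarrow> nat) \<Rightarrow> (nat \<times> nat) set" where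
  "spider_V m l = {(0,0)} \<union> {(i,j). 1 \<le> i \<and> i \<le> m \<and> 1 \<le> j \<and> j \<le> l i}"

definition spider_arc :: "nat \<Rightarrow> (nat \<Rightarrow> nat) \<Rightarrow> nat \<times> nat \<Rightarrow> nat \<times> nat \<Rightarrow> bool" where
  "spider_arc m l x y \<longleftrightarrow>
     (\<exists>i. 1 \<le> i \<and> i \<le> m \<and> 1 \<le> l i \<and> x = (0,0) \<and> y = (i,1)) \<or>
     (\<exists>i j. 1 \<le> i \<and> i \<le> m \<and> 1 \<le> j \<and> j + 1 \<le> l i \<and> x = (i,j) \<and> y = (i,j+1))"

definition spider_E :: "nat \<Rightarrow> (nat \<Rightarrow> nat) \<Rightarrow> nat \<times> nat \<Rightarrow> nat \<times> nat \<Rightarrow> bool" where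
  "spider_E m l x y \<longleftrightarrow> spider_arc m l x y \<or> spider_arc m l y x"

end

theory Submission
  imports Defs
begin

text \<open>The square of the spider has bandwidth at most \<open>m\<close>: its vertices can be placed injectively
on the integers so that vertices at distance at most 2 in \<open>H\<close> land at most \<open>m\<close> apart. The centre
goes to 0; the remaining legs are split evenly between the two sides, consecutive depths of a side
occupying consecutive blocks of slots, so that a step along a leg moves by about \<open>m/2\<close> and two steps
by at most \<open>m\<close>. The legs of length at most 2 absorb the parity of \<open>m\<close>.

A graph of bandwidth \<open>m\<close> is equitably \<open>(m+1)\<close>-choosable: colour greedily along the layout after
turning every block of \<open>m+1\<close> consecutive vertices into a clique. This keeps the bandwidth at \<open>m\<close>,
so every vertex still has at most \<open>m\<close> earlier neighbours, and each colour is used at most once per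
block, i.e. at most \<open>\<lceil>n/(m+1)\<rceil>\<close> times.\<close>

section \<open>Greedy list colouring along a layout of small bandwidth\<close>

lemma list_colouring_if_rank_bandwidth:
  assumes "bij_betw r V {0..<n}"
    and "\<forall>x\<in>V. \<forall>y\<in>V. E x y \<longrightarrow> r x \<le> r y + m \<and> r y \<le> r x + m"
    and "k_assignment V L (Suc m)"
    and "\<forall>x\<in>V. \<not> E x x"
  shows "\<exists>f. (\<forall>v\<in>V. f v \<in> L v) \<and> (\<forall>x\<in>V. \<forall>y\<in>V. E x y \<longrightarrow> f x \<noteq> f y)"
  using assms
proof (induction n arbitrary: V)
  case 0
  then show ?case by (simp add: bij_betw_def)
next
  case (Suc n)
  note bij = Suc.prems(1) and bandwidth = Suc.prems(2) and lists = Suc.prems(3)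
    and irrefl = Suc.prems(4)
  obtain x where xV: "x \<in> V" and rx: "r x = n"
    using bij by (metis atLeastLessThan_iff bij_betw_def imageE lessI zero_le)
  define V' where "V' = V - {x}"
  have "bij_betw r V' ({0..<Suc n} - {n})"
    unfolding V'_def using bij xV rx by (intro bij_betw_DiffI) (auto simp: bij_betw_def)
  then have bij': "bij_betw r V' {0..<n}"
    by (simp add: atLeast0_lessThan_Suc)
  obtain f' where f'_in: "\<forall>v\<in>V'. f' v \<in> L v"
    and f'_proper: "\<forall>y\<in>V'. \<forall>z\<in>V'. E y z \<longrightarrow> f' y \<noteq> f' z"
    using Suc.IH[OF bij'] bandwidth lists irrefl by (auto simp: V'_def k_assignment_def)
  define N where "N = {w \<in> V'. E x w \<or> E w x}"
  have "r ` N \<subseteq> {n - m..<n}"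
  proof
    fix t assume "t \<in> r ` N"
    then obtain w where w: "w \<in> V'" "E x w \<or> E w x" "t = r w"
      by (auto simp: N_def)
    have "r w < n" using bij' w(1) by (auto simp: bij_betw_def)
    moreover have "n \<le> r w + m"
      using bandwidth xV w(1,2) rx unfolding V'_def by auto
    ultimately show "t \<in> {n - m..<n}" using w(3) by simp
  qed
  moreover have "inj_on r N"
    using bij' by (auto simp: N_def bij_betw_def inj_on_def)
  ultimately have "card N \<le> card {n - m..<n}"
    by (metis card_image card_mono finite_atLeastLessThan)
  then have "card N \<le> m" by simp
  moreover have "finite N"
    using bij_betw_finite[OF bij'] by (simp add: N_def)
  ultimately have "card (f' ` N) < card (L x)"
    using lists xV card_image_le[of N f'] by (auto simp: k_assignment_def)
  then obtain c where c: "c \<in> L x" "c \<notin> f' ` N"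
    by (meson card_mono finite_imageI \<open>finite N\<close> leD subsetI)
  define f where "f = f'(x := c)"
  have "\<forall>v\<in>V. f v \<in> L v"
    using f'_in c by (auto simp: f_def V'_def)
  moreover have "\<forall>y\<in>V. \<forall>z\<in>V. E y z \<longrightarrow> f y \<noteq> f z"
    using f'_proper c irrefl by (auto simp: f_def V'_def N_def)
  ultimately show ?case by blast
qed

lemma card_le_ceiling_if_inj_on_div:
  fixes r :: "'a \<Rightarrow> nat"
  assumes "inj_on (\<lambda>v. r v div k) C" "\<forall>v\<in>C. r v < n" "k > 0"
  shows "card C \<le> nat \<lceil>real n / real k\<rceil>"
proof (cases "C = {}")
  case False
  define q where "q = (n - 1) div k"
  have "card C = card ((\<lambda>v. r v div k) ` C)"
    using assms(1) by (simp add: card_image)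
  also have "\<dots> \<le> card {0..q}"
  proof (intro card_mono subsetI)
    fix b assume "b \<in> (\<lambda>v. r v div k) ` C"
    then obtain v where "v \<in> C" "b = r v div k" by blast
    moreover have "r v \<le> n - 1"
      using assms(2) \<open>v \<in> C\<close> by fastforce
    ultimately show "b \<in> {0..q}"
      by (simp add: q_def div_le_mono)
  qed simp
  also have "\<dots> = q + 1"
    by simp
  also have "\<dots> \<le> nat \<lceil>real n / real k\<rceil>"
  proof -
    have "q * k \<le> n - 1"
      unfolding q_def by (rule div_times_less_eq_dividend)
    moreover have "n \<ge> 1"
      using False assms(2) by fastforce
    ultimately have "real q < real n / real k"
      using assms(3) by (simp add: pos_less_divide_eq flip: of_nat_mult)
    then show ?thesis
      by (simp add: le_nat_iff le_ceiling_iff)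
  qed
  finally show ?thesis .
qed simp

lemma le_add_if_div_eq:
  fixes a b m :: nat
  assumes "a div Suc m = b div Suc m"
  shows "a \<le> b + m"
proof -
  have "a div Suc m * Suc m + a mod Suc m = a" "b div Suc m * Suc m + b mod Suc m = b"
    by (rule div_mult_mod_eq)+
  moreover have "a mod Suc m \<le> m"
    using less_Suc_eq_le by auto
  ultimately show ?thesis
    using assms by (metis add_le_mono le_add1 add_le_cancel_left)
qed

definition pos_rank :: "'a set \<Rightarrow> ('a \<Rightarrow> int) \<Rightarrow> 'a \<Rightarrow> nat" where
  "pos_rank V pos v = card {w \<in> V. pos w < pos v}"

lemma bij_betw_pos_rank:
  assumes "finite V" "inj_on pos V"
  shows "bij_betw (pos_rank V pos) V {0..<card V}"
proof -
  have less: "pos_rank V pos x < pos_rank V pos y" if "x \<in> V" "y \<in> V" "pos x < pos y" for x y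
    unfolding pos_rank_def using that assms(1) by (intro psubset_card_mono) auto
  have "inj_on (pos_rank V pos) V"
    by (rule inj_onI) (metis assms(2) inj_onD less less_irrefl linorder_neqE)
  moreover have "pos_rank V pos ` V \<subseteq> {0..<card V}"
    unfolding pos_rank_def using assms(1) by (auto intro!: psubset_card_mono)
  ultimately show ?thesis
    by (simp add: bij_betw_def card_image card_subset_eq)
qed

lemma pos_rank_le_add_pos_diff:
  assumes "finite V" "inj_on pos V" "pos y \<le> pos x"
  shows "pos_rank V pos x \<le> pos_rank V pos y + nat (pos x - pos y)"
proof -
  define between where "between = {w \<in> V. pos y \<le> pos w \<and> pos w < pos x}"
  have "pos_rank V pos x \<le> card ({w \<in> V. pos w < pos y} \<union> between)"
    unfolding pos_rank_def using assms(1) by (intro card_mono) (auto simp: between_def)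
  also have "\<dots> \<le> pos_rank V pos y + card between"
    unfolding pos_rank_def by (rule card_Un_le)
  also have "card between = card (pos ` between)"
    using assms(2) by (intro card_image[symmetric]) (auto simp: between_def inj_on_def)
  also have "\<dots> \<le> card {pos y..<pos x}"
    by (intro card_mono) (auto simp: between_def)
  finally show ?thesis
    by simp
qed

lemma pos_rank_close:
  assumes "finite V" "inj_on pos V" "\<bar>pos x - pos y\<bar> \<le> int m"
  shows "pos_rank V pos x \<le> pos_rank V pos y + m"
proof (cases "pos y \<le> pos x")
  case True
  then show ?thesis
    using pos_rank_le_add_pos_diff[OF assms(1,2) True] assms(3) by linarith
next
  case False
  then have "pos_rank V pos x \<le> pos_rank V pos y"
    unfolding pos_rank_def using assms(1) by (intro card_mono) auto
  then show ?thesis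
    by simp
qed

theorem equitably_choosable_if_bandwidth:
  assumes "finite V" "inj_on pos V"
    and bandwidth: "\<forall>x\<in>V. \<forall>y\<in>V. E x y \<longrightarrow> \<bar>pos x - pos y\<bar> \<le> int m"
    and irrefl: "\<forall>x\<in>V. \<not> E x x"
  shows "equitably_choosable V E (Suc m)"
  unfolding equitably_choosable_def
proof (intro allI impI)
  fix L assume lists: "k_assignment V L (Suc m)"
  define r where "r = pos_rank V pos"
  define E' where "E' x y \<longleftrightarrow> E x y \<or> (x \<noteq> y \<and> r x div Suc m = r y div Suc m)" for x y
  have bij: "bij_betw r V {0..<card V}"
    unfolding r_def using assms(1,2) by (rule bij_betw_pos_rank)
  have "\<forall>x\<in>V. \<forall>y\<in>V. E' x y \<longrightarrow> r x \<le> r y + m \<and> r y \<le> r x + m"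
    using bandwidth pos_rank_close[OF assms(1,2)] le_add_if_div_eq
    by (auto simp: E'_def r_def abs_minus_commute)
  moreover have "\<forall>x\<in>V. \<not> E' x x"
    using irrefl by (simp add: E'_def)
  ultimately have "\<exists>f. (\<forall>v\<in>V. f v \<in> L v) \<and> (\<forall>x\<in>V. \<forall>y\<in>V. E' x y \<longrightarrow> f x \<noteq> f y)"
    by (intro list_colouring_if_rank_bandwidth[OF bij _ lists])
  then obtain f where f_in: "\<forall>v\<in>V. f v \<in> L v"
    and f_proper: "\<forall>x\<in>V. \<forall>y\<in>V. E' x y \<longrightarrow> f x \<noteq> f y"
    by blast
  have "card {v \<in> V. f v = c} \<le> nat \<lceil>real (card V) / real (Suc m)\<rceil>" for c
  proof (rule card_le_ceiling_if_inj_on_div)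
    show "inj_on (\<lambda>v. r v div Suc m) {v \<in> V. f v = c}"
      using f_proper unfolding inj_on_def E'_def by fastforce
    show "\<forall>v\<in>{v \<in> V. f v = c}. r v < card V"
      using bij by (auto simp: bij_betw_def)
  qed simp
  then have "equitable_L_coloring V E L (Suc m) f"
    unfolding equitable_L_coloring_def using f_in f_proper by (simp add: E'_def)
  then show "\<exists>f. equitable_L_coloring V E L (Suc m) f"
    by blast
qed

section \<open>A layout of the square of a spider\<close>

text \<open>Legs \<open>3, \<dots>, num_right_legs m + 2\<close> go to the right, the remaining ones to the left.
On a side carrying \<open>s\<close> legs, the vertex at depth \<open>j\<close> of the \<open>r\<close>-th leg sits at distance
\<open>side_pos m s r j\<close> from the centre: depths 1 and 2 fill the slots \<open>2, \<dots>, 2s + 1\<close>, and depth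
\<open>j \<ge> 3\<close> the \<open>(j - 3)\<close>-th block of \<open>s\<close> slots after \<open>m\<close>. Leg 1 takes \<open>-1\<close> and \<open>-m\<close>, leg 2
takes \<open>1\<close> and whichever of \<open>m\<close>, \<open>-(m - 1)\<close> the two sides leave free, depending on the
parity of \<open>m\<close>.\<close>

definition num_right_legs :: "nat \<Rightarrow> nat" where
  "num_right_legs m = (m - 1) div 2"

definition num_left_legs :: "nat \<Rightarrow> nat" where
  "num_left_legs m = m - 2 - num_right_legs m"

definition side_pos :: "nat \<Rightarrow> nat \<Rightarrow> nat \<Rightarrow> nat \<Rightarrow> int" where
  "side_pos m s r j =
     (if j = 1 then 2 + int r
      else if j = 2 then int s + 2 + int r
      else int m + 1 + int (j - 3) * int s + int r)"

definition spider_pos :: "nat \<Rightarrow> nat \<times> nat \<Rightarrow> int" where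
  "spider_pos m v = (case v of (i, j) \<Rightarrow>
     if i = 0 then 0
     else if i = 1 then (if j = 1 then -1 else - int m)
     else if i = 2 then (if j = 1 then 1 else if even m then int m else - (int m - 1))
     else if i \<le> num_right_legs m + 2 then side_pos m (num_right_legs m) (i - 3) j
     else - side_pos m (num_left_legs m) (i - num_right_legs m - 3) j)"

lemma num_legs:
  assumes "m \<ge> 3"
  shows "num_left_legs m + num_right_legs m + 2 = m"
    and "2 * num_right_legs m + 1 \<le> m" "2 * num_left_legs m + 2 \<le> m"
    and "even m \<Longrightarrow> 2 * num_right_legs m + 2 = m"
    and "odd m \<Longrightarrow> 2 * num_left_legs m + 3 = m"
proof -
  have "m - 1 = 2 * num_right_legs m + (m - 1) mod 2"
    by (simp add: num_right_legs_def)
  moreover have "(m - 1) mod 2 = (if even m then 1 else 0)"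
    using assms by presburger
  ultimately show "num_left_legs m + num_right_legs m + 2 = m"
    and "2 * num_right_legs m + 1 \<le> m" "2 * num_left_legs m + 2 \<le> m"
    and "even m \<Longrightarrow> 2 * num_right_legs m + 2 = m"
    and "odd m \<Longrightarrow> 2 * num_left_legs m + 3 = m"
    using assms by (auto simp: num_left_legs_def split: if_split_asm)
qed

lemma depth_cases:
  assumes "(j::nat) \<ge> 1"
  obtains "j = 1" | "j = 2" | t where "j = 3 + t"
proof -
  consider "j = 1" | "j = 2" | "j \<ge> 3"
    using assms by linarith
  then show thesis
    using that le_Suc_ex[of 3 j] by cases auto
qed

lemma side_pos_range:
  assumes "r < s" "2 * s + 1 \<le> m" "1 \<le> j"
  shows "2 \<le> side_pos m s r j"
    and "side_pos m s r j \<le> 2 * int s + 1 \<or> int m + 1 \<le> side_pos m s r j"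
  using assms(3)
  by (cases rule: depth_cases) (use assms(1,2) in \<open>simp_all add: side_pos_def flip: of_nat_mult\<close>)

lemma side_pos_steps:
  assumes "2 * s + 1 \<le> m" "1 \<le> j"
  shows "\<bar>side_pos m s r (j + 1) - side_pos m s r j\<bar> \<le> int m"
    and "\<bar>side_pos m s r (j + 2) - side_pos m s r j\<bar> \<le> int m"
  using assms(2)
  by (cases rule: depth_cases) (use assms(1) in \<open>simp_all add: side_pos_def algebra_simps\<close>)

lemma side_pos_inj:
  assumes "r < s" "r' < s" "2 * s + 1 \<le> m" "1 \<le> j" "1 \<le> j'"
    and "side_pos m s r j = side_pos m s r' j'"
  shows "r = r' \<and> j = j'"
proof -
  have low: "side_pos m s q k \<le> 2 * int s + 1" if "1 \<le> k" "k \<le> 2" "q < s" for q k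
    using that by (auto simp: side_pos_def)
  have high: "int m + 1 \<le> side_pos m s q (3 + t)" for q t
    by (simp add: side_pos_def flip: of_nat_mult)
  consider "j \<le> 2" "j' \<le> 2" | t t' where "j = 3 + t" "j' = 3 + t'"
    | t where "j' \<le> 2" "j = 3 + t" | t' where "j \<le> 2" "j' = 3 + t'"
    by (metis le_Suc_ex not_less_eq_eq numeral_2_eq_2 numeral_3_eq_3)
  then show ?thesis
  proof cases
    case 1
    then show ?thesis
      using assms by (auto simp: side_pos_def split: if_splits)
  next
    case (2 t t')
    then have "int (t * s + r) = int (t' * s + r')"
      using assms(6) by (simp add: side_pos_def)
    then have "t * s + r = t' * s + r'"
      by linarith
    moreover have "t = (t * s + r) div s" "r = (t * s + r) mod s"
      and "t' = (t' * s + r') div s" "r' = (t' * s + r') mod s"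
      using assms(1,2) by simp_all
    ultimately show ?thesis
      using 2 by metis
  next
    case (3 t)
    then have "int m + 1 \<le> side_pos m s r j"
      using high by simp
    then show ?thesis
      using 3 low[of j' r'] assms by linarith
  next
    case (4 t')
    then have "int m + 1 \<le> side_pos m s r' j'"
      using high by simp
    then show ?thesis
      using 4 low[of j r] assms by linarith
  qed
qed

lemma spider_pos_centre: "spider_pos m (0, j) = 0"
  by (simp add: spider_pos_def)

lemma spider_pos_right_leg:
  "3 \<le> i \<Longrightarrow> i \<le> num_right_legs m + 2 \<Longrightarrow>
    spider_pos m (i, j) = side_pos m (num_right_legs m) (i - 3) j"
  by (simp add: spider_pos_def)

lemma spider_pos_left_leg:
  "num_right_legs m + 2 < i \<Longrightarrow>
    spider_pos m (i, j) = - side_pos m (num_left_legs m) (i - num_right_legs m - 3) j"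
  by (simp add: spider_pos_def)

lemma leg_cases:
  assumes "m \<ge> 3" "1 \<le> i" "i \<le> m"
  obtains "i = 1" | "i = 2"
    | (right) "3 \<le> i" "i \<le> num_right_legs m + 2" "i - 3 < num_right_legs m"
    | (left) "num_right_legs m + 2 < i" "i - num_right_legs m - 3 < num_left_legs m"
proof -
  consider "i = 1" | "i = 2" | "3 \<le> i" "i \<le> num_right_legs m + 2" | "num_right_legs m + 2 < i"
    using assms(2) by linarith
  then show thesis
    using that num_legs(1)[OF assms(1)] assms(3) by cases linarith+
qed

lemma spider_pos_depth1_bounds:
  assumes "m \<ge> 3" "1 \<le> i" "i \<le> m"
  shows "- (int (num_left_legs m) + 1) \<le> spider_pos m (i, 1)"
    and "spider_pos m (i, 1) \<le> int (num_right_legs m) + 1"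
  using assms
  by (cases rule: leg_cases)
    (simp_all add: spider_pos_def side_pos_def spider_pos_right_leg spider_pos_left_leg)

lemma abs_spider_pos_depth2_le:
  assumes "m \<ge> 3" "1 \<le> i" "i \<le> m"
  shows "\<bar>spider_pos m (i, 2)\<bar> \<le> int m"
  using assms
  by (cases rule: leg_cases)
    (use num_legs[OF assms(1)] in \<open>simp_all add: spider_pos_def side_pos_def\<close>)

lemma spider_pos_right_leg_range:
  assumes "m \<ge> 3" "3 \<le> i" "i \<le> num_right_legs m + 2" "1 \<le> j"
  shows "2 \<le> spider_pos m (i, j)"
    and "spider_pos m (i, j) \<le> 2 * int (num_right_legs m) + 1 \<or> int m + 1 \<le> spider_pos m (i, j)"
  using side_pos_range[of "i - 3" "num_right_legs m" m j] num_legs(2)[OF assms(1)] assms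
  by (simp_all add: spider_pos_right_leg)

lemma spider_pos_left_leg_range:
  assumes "m \<ge> 3" "num_right_legs m + 2 < i" "i \<le> m" "1 \<le> j"
  shows "spider_pos m (i, j) \<le> -2"
    and "- (2 * int (num_left_legs m) + 1) \<le> spider_pos m (i, j) \<or> spider_pos m (i, j) \<le> - (int m + 1)"
proof -
  have "i - num_right_legs m - 3 < num_left_legs m"
    using num_legs(1)[OF assms(1)] assms(2,3) by linarith
  moreover have "2 * num_left_legs m + 1 \<le> m"
    using num_legs(3)[OF assms(1)] by linarith
  ultimately have "2 \<le> side_pos m (num_left_legs m) (i - num_right_legs m - 3) j"
    and "side_pos m (num_left_legs m) (i - num_right_legs m - 3) j \<le> 2 * int (num_left_legs m) + 1
      \<or> int m + 1 \<le> side_pos m (num_left_legs m) (i - num_right_legs m - 3) j"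
    using side_pos_range assms(4) by blast+
  then show "spider_pos m (i, j) \<le> -2"
    and "- (2 * int (num_left_legs m) + 1) \<le> spider_pos m (i, j) \<or> spider_pos m (i, j) \<le> - (int m + 1)"
    using assms(2) by (auto simp: spider_pos_left_leg)
qed

lemma spider_pos_right_leg_inj:
  assumes "m \<ge> 3" "3 \<le> i" "i \<le> num_right_legs m + 2" "3 \<le> i'" "i' \<le> num_right_legs m + 2"
    and "1 \<le> j" "1 \<le> j'" "spider_pos m (i, j) = spider_pos m (i', j')"
  shows "i = i' \<and> j = j'"
proof -
  have "i - 3 = i' - 3 \<and> j = j'"
  proof (rule side_pos_inj)
    show "i - 3 < num_right_legs m" "i' - 3 < num_right_legs m"
      using assms(2-5) by linarith+
    show "side_pos m (num_right_legs m) (i - 3) j = side_pos m (num_right_legs m) (i' - 3) j'"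
      using assms(2-5,8) by (simp add: spider_pos_right_leg)
  qed (use num_legs(2)[OF assms(1)] assms(6,7) in auto)
  then show ?thesis
    using assms(2,4) by auto
qed

lemma spider_pos_left_leg_inj:
  assumes "m \<ge> 3" "num_right_legs m + 2 < i" "i \<le> m" "num_right_legs m + 2 < i'" "i' \<le> m"
    and "1 \<le> j" "1 \<le> j'" "spider_pos m (i, j) = spider_pos m (i', j')"
  shows "i = i' \<and> j = j'"
proof -
  have "i - num_right_legs m - 3 = i' - num_right_legs m - 3 \<and> j = j'"
  proof (rule side_pos_inj)
    show "i - num_right_legs m - 3 < num_left_legs m" "i' - num_right_legs m - 3 < num_left_legs m"
      using num_legs(1)[OF assms(1)] assms(2-5) by linarith+
    show "side_pos m (num_left_legs m) (i - num_right_legs m - 3) j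
        = side_pos m (num_left_legs m) (i' - num_right_legs m - 3) j'"
      using assms(2,4,8) by (simp add: spider_pos_left_leg)
  qed (use num_legs(3)[OF assms(1)] assms(6,7) in auto)
  then show ?thesis
    using assms(2,4) by auto
qed

lemma spider_pos_legs_inj:
  assumes "m \<ge> 3" "3 \<le> i" "i \<le> m" "3 \<le> i'" "i' \<le> m" "1 \<le> j" "1 \<le> j'"
    and "spider_pos m (i, j) = spider_pos m (i', j')"
  shows "i = i' \<and> j = j'"
proof (cases "i \<le> num_right_legs m + 2"; cases "i' \<le> num_right_legs m + 2")
  assume "i \<le> num_right_legs m + 2" "i' \<le> num_right_legs m + 2"
  then show ?thesis
    using spider_pos_right_leg_inj assms by blast
next
  assume "\<not> i \<le> num_right_legs m + 2" "\<not> i' \<le> num_right_legs m + 2"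
  then show ?thesis
    using spider_pos_left_leg_inj assms by (meson not_le)
next
  assume "i \<le> num_right_legs m + 2" "\<not> i' \<le> num_right_legs m + 2"
  then show ?thesis
    using spider_pos_right_leg_range(1)[of m i j] spider_pos_left_leg_range(1)[of m i' j'] assms
    by linarith
next
  assume "\<not> i \<le> num_right_legs m + 2" "i' \<le> num_right_legs m + 2"
  then show ?thesis
    using spider_pos_left_leg_range(1)[of m i j] spider_pos_right_leg_range(1)[of m i' j'] assms
    by linarith
qed

lemma spider_pos_near_centre_ne_leg:
  assumes "m \<ge> 3" "p \<in> {0, -1, 1, - int m, if even m then int m else - (int m - 1)}"
    and "3 \<le> i" "i \<le> m" "1 \<le> j"
  shows "spider_pos m (i, j) \<noteq> p"
proof (cases "i \<le> num_right_legs m + 2")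
  case True
  then show ?thesis
    using spider_pos_right_leg_range[OF assms(1,3) True assms(5)] num_legs(4)[OF assms(1)] assms(2)
    by (cases "even m") auto
next
  case False
  then show ?thesis
    using spider_pos_left_leg_range[OF assms(1) _ assms(4,5)] num_legs(3,5)[OF assms(1)] assms(1,2)
    by (cases "even m") auto
qed

lemma inj_on_spider_pos_near_centre:
  "m \<ge> 3 \<Longrightarrow> inj_on (spider_pos m) {(0, 0), (1, 1), (1, 2), (2, 1), (2, 2)}"
  by (auto simp: inj_on_def spider_pos_def)

lemma finite_spider_V: "finite (spider_V m l)"
proof (rule finite_subset)
  show "spider_V m l \<subseteq> insert (0, 0) (SIGMA i:{1..m}. {1..l i})"
    by (auto simp: spider_V_def)
qed auto

lemma spider_arc_parent_unique:
  "spider_arc m l x z \<Longrightarrow> spider_arc m l y z \<Longrightarrow> x = y"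
  unfolding spider_arc_def by auto

context
  fixes m :: nat and l :: "nat \<Rightarrow> nat"
  assumes m: "m \<ge> 3" and short_legs: "l 1 \<le> 2" "l 2 \<le> 2"
begin

lemma abs_spider_pos_step_le:
  assumes "1 \<le> i" "i \<le> m" "1 \<le> j" "j + 1 \<le> l i"
  shows "\<bar>spider_pos m (i, j + 1) - spider_pos m (i, j)\<bar> \<le> int m"
  using m assms(1,2)
proof (cases rule: leg_cases)
  case right
  then show ?thesis
    using side_pos_steps(1)[of "num_right_legs m" m j "i - 3"] num_legs[OF m] assms(3)
    by (simp add: spider_pos_right_leg)
next
  case left
  then show ?thesis
    using side_pos_steps(1)[of "num_left_legs m" m j "i - num_right_legs m - 3"] num_legs[OF m] assms(3)
    by (simp add: spider_pos_left_leg abs_minus_commute)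
qed (use m short_legs assms in \<open>auto simp: spider_pos_def\<close>)

lemma abs_spider_pos_step2_le:
  assumes "1 \<le> i" "i \<le> m" "1 \<le> j" "j + 2 \<le> l i"
  shows "\<bar>spider_pos m (i, j + 2) - spider_pos m (i, j)\<bar> \<le> int m"
  using m assms(1,2)
proof (cases rule: leg_cases)
  case right
  then show ?thesis
    using side_pos_steps(2)[of "num_right_legs m" m j "i - 3"] num_legs[OF m] assms(3)
    by (simp add: spider_pos_right_leg)
next
  case left
  then show ?thesis
    using side_pos_steps(2)[of "num_left_legs m" m j "i - num_right_legs m - 3"] num_legs[OF m] assms(3)
    by (simp add: spider_pos_left_leg abs_minus_commute)
qed (use short_legs assms in auto)

lemma abs_spider_pos_diff_le_if_arc:
  assumes "spider_arc m l x y"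
  shows "\<bar>spider_pos m x - spider_pos m y\<bar> \<le> int m"
  using assms unfolding spider_arc_def
proof (elim disjE exE conjE)
  fix i assume "1 \<le> i" "i \<le> m" "x = (0, 0)" "y = (i, 1)"
  then show ?thesis
    using spider_pos_depth1_bounds[OF m, of i] num_legs(1)[OF m] by (simp add: spider_pos_centre)
next
  fix i j assume "1 \<le> i" "i \<le> m" "1 \<le> j" "j + 1 \<le> l i" "x = (i, j)" "y = (i, j + 1)"
  then show ?thesis
    using abs_spider_pos_step_le[of i j] by (simp add: abs_minus_commute)
qed

lemma abs_spider_pos_diff_le_if_path2:
  assumes "spider_arc m l x z" "spider_arc m l z y"
  shows "\<bar>spider_pos m x - spider_pos m y\<bar> \<le> int m"
  using assms unfolding spider_arc_def
proof (elim disjE exE conjE)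
  fix i i' j assume "1 \<le> i" "i \<le> m" "x = (0, 0)" "z = (i, 1)" "z = (i', j)" "y = (i', j + 1)"
  then show ?thesis
    using abs_spider_pos_depth2_le[OF m, of i] by (simp add: spider_pos_centre numeral_2_eq_2)
next
  fix i j i' j' assume "1 \<le> i" "i \<le> m" "1 \<le> j" "j + 1 \<le> l i" "x = (i, j)"
    "z = (i, j + 1)" "z = (i', j')" "y = (i', j' + 1)" "j' + 1 \<le> l i'"
  then show ?thesis
    using abs_spider_pos_step2_le[of i j] by (simp add: abs_minus_commute)
qed auto

lemma abs_spider_pos_diff_le_if_siblings:
  assumes "spider_arc m l z x" "spider_arc m l z y"
  shows "\<bar>spider_pos m x - spider_pos m y\<bar> \<le> int m"
  using assms unfolding spider_arc_def
proof (elim disjE exE conjE)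
  fix i i' assume "1 \<le> i" "i \<le> m" "1 \<le> i'" "i' \<le> m" "x = (i, 1)" "y = (i', 1)"
  then show ?thesis
    using spider_pos_depth1_bounds[OF m, of i] spider_pos_depth1_bounds[OF m, of i'] num_legs(1)[OF m]
    by simp
qed auto

lemma abs_spider_pos_diff_le_if_square:
  assumes "graph_square (spider_V m l) (spider_E m l) x y"
  shows "\<bar>spider_pos m x - spider_pos m y\<bar> \<le> int m"
proof -
  from assms have "spider_E m l x y \<or> (\<exists>z. spider_E m l x z \<and> spider_E m l z y)"
    unfolding graph_square_def by blast
  then show ?thesis
    unfolding spider_E_def
  proof (elim disjE exE conjE)
    fix z assume "spider_arc m l x z" "spider_arc m l y z"
    then show ?thesis
      using spider_arc_parent_unique by fastforce
  qed (use abs_spider_pos_diff_le_if_arc abs_spider_pos_diff_le_if_path2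
      abs_spider_pos_diff_le_if_siblings abs_minus_commute in metis)+
qed

lemma spider_V_near_centre:
  assumes "(i, j) \<in> spider_V m l" "i \<le> 2"
  shows "(i, j) \<in> {(0, 0), (1, 1), (1, 2), (2, 1), (2, 2)}"
  using assms short_legs by (auto simp: spider_V_def le_Suc_eq numeral_2_eq_2)

lemma spider_pos_near_centre:
  assumes "(i, j) \<in> spider_V m l" "i \<le> 2"
  shows "spider_pos m (i, j) \<in> {0, -1, 1, - int m, if even m then int m else - (int m - 1)}"
  using spider_V_near_centre[OF assms] by (auto simp: spider_pos_def)

lemma inj_on_spider_pos: "inj_on (spider_pos m) (spider_V m l)"
proof (rule inj_onI)
  fix x y assume x: "x \<in> spider_V m l" and y: "y \<in> spider_V m l"
    and eq: "spider_pos m x = spider_pos m y"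
  have leg: "1 \<le> snd v \<and> fst v \<le> m" if "v \<in> spider_V m l" "3 \<le> fst v" for v
    using that by (auto simp: spider_V_def)
  consider "fst x \<le> 2" "fst y \<le> 2" | "fst x \<le> 2" "3 \<le> fst y" | "3 \<le> fst x" "fst y \<le> 2"
    | "3 \<le> fst x" "3 \<le> fst y"
    by linarith
  then show "x = y"
  proof cases
    case 1
    then show ?thesis
      using inj_onD[OF inj_on_spider_pos_near_centre[OF m] eq] spider_V_near_centre[of "fst x" "snd x"]
        spider_V_near_centre[of "fst y" "snd y"] x y
      by simp
  next
    case 2
    then have "spider_pos m x \<in> {0, -1, 1, - int m, if even m then int m else - (int m - 1)}"
      using spider_pos_near_centre[of "fst x" "snd x"] x by simp
    then show ?thesis
      using spider_pos_near_centre_ne_leg[OF m, of _ "fst y" "snd y"] leg[OF y] 2 eq by simp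
  next
    case 3
    then have "spider_pos m y \<in> {0, -1, 1, - int m, if even m then int m else - (int m - 1)}"
      using spider_pos_near_centre[of "fst y" "snd y"] y by simp
    then show ?thesis
      using spider_pos_near_centre_ne_leg[OF m, of _ "fst x" "snd x"] leg[OF x] 3 eq by simp
  next
    case 4
    then show ?thesis
      using spider_pos_legs_inj[OF m, of "fst x" "fst y" "snd x" "snd y"] leg[OF x] leg[OF y] eq
      by (simp add: prod_eq_iff)
  qed
qed

end

theorem lemma2p6:
  fixes m :: nat and l :: "nat \<Rightarrow> nat"
  assumes "m \<ge> 3"
    and "\<forall>i. 1 \<le> i \<and> i \<le> m \<longrightarrow> l i \<ge> 1"
    and "\<forall>i j. 1 \<le> i \<and> i \<le> j \<and> j \<le> m \<longrightarrow> l i \<le> l j"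
    and "l 1 \<le> l 2" and "l 2 \<le> 2"
  shows "equitably_choosable (spider_V m l)
           (graph_square (spider_V m l) (spider_E m l)) (m + 1)"
proof -
  have short_legs: "l 1 \<le> 2" "l 2 \<le> 2"
    using assms(4,5) by linarith+
  have "equitably_choosable (spider_V m l) (graph_square (spider_V m l) (spider_E m l)) (Suc m)"
  proof (rule equitably_choosable_if_bandwidth)
    show "inj_on (spider_pos m) (spider_V m l)"
      using inj_on_spider_pos[OF assms(1) short_legs] .
    show "\<forall>x\<in>spider_V m l. \<forall>y\<in>spider_V m l.
        graph_square (spider_V m l) (spider_E m l) x y \<longrightarrow> \<bar>spider_pos m x - spider_pos m y\<bar> \<le> int m"
      using abs_spider_pos_diff_le_if_square[OF assms(1) short_legs] by blast
  qed (simp_all add: finite_spider_V graph_square_def)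
  then show ?thesis
    by simp
qed

end
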